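(* Let $M$ be a partial multiplication matrix and let $\pi^\#\in\mathsf{Grid}^\#(M)$. Then $\pi^\#$ is $M$-indivisible if and only if its orientation digraph $D_{\pi^\#}$ is strongly connected.
   Context: A gridding matrix has entries in $\{0,1,-1\}$; an $m\times n$ one has $m$ columns, $n$ rows, $M_{ij}$ in column $i$ from the left and row $j$ from the bottom. An $M$-gridding of a permutation $\pi$ of length $L$ is a choice of vertical lines $\tfrac12=v_0\le\dots\le v_m=L+\tfrac12$ and horizontal lines $\tfrac12=h_0\le\dots\le h_n=L+\tfrac12$, not through points of $\pi$, such that in each cell $C_{ij}=\{v_{i-1}<x<v_i,\ h_{j-1}<y<h_j\}$ the points of $\pi$ are absent if $M_{ij}=0$, increasing if $M_{ij}=1$, decreasing if $M_{ij}=-1$. $\mathsf{Grid}^\#(M)$ is the set of $M$-gridded permutations. $M$ is a partial multiplication matrix: there are fixed $c_1,\dots,c_m,r_1,\dots,r_n\in\{\pm1\}$ with $M_{ij}=c_ir_j$ for each non-zero entry. Column $i$ is oriented left-to-right if $c_i=1$, right-to-left otherwise; row $j$ bottom-to-top if $r_j=1$, top-to-bottom otherwise. The orientation digraph $D_{\pi^\#}$ has the points of $\pi^\#$ as vertices, with $x\to y$ whenever $x,y$ lie in a common column of cells and $x$ precedes $y$ in that column's orientation, or in a common row of cells and $x$ precedes $y$ in that row's orientation. $M$-sum: for $M$-gridded $\sigma^\#,\tau^\#$, $\sigma^\#\boxplus\tau^\#$ is the $M$-gridded permutation whose points are those of $\sigma^\#$ and $\tau^\#$, each in the cell it occupied,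 with the relative order (in position and value) among points of $\sigma^\#$ and among points of $\tau^\#$ unchanged, and such that in every column of cells all points of $\sigma^\#$ precede all points of $\tau^\#$ in the column's orientation and in every row of cells all points of $\sigma^\#$ precede all points of $\tau^\#$ in the row's orientation. (Equivalently: place $\sigma^\#$ in the first copy and $\tau^\#$ in the second copy of $M$ inside the doubled matrix $M^{\times2}$ and delete odd-numbered grid lines.) $\pi^\#$ is $M$-divisible if $\pi^\#=\sigma^\#\boxplus\tau^\#$ with $\sigma^\#,\tau^\#$ non-empty, and $M$-indivisible otherwise. *)

theory Defs
  imports Main
begin

text \<open>
Conventions. A gridding matrix with m columns and n rows is a function
M :: nat => nat => int, used on 1 <= i <= m (column, from the left) and
1 <= j <= n (row, from the bottom).

An M-gridded permutation of length L is a record with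
 - len = L,
 - perm: the permutation, a bijection of {1..L} (position x has value perm x),
 - vl: vertical lines, vl i = k encodes the line at k + 1/2 (i = 0..m),
 - hl: horizontal lines, hl j = k encodes the line at k + 1/2 (j = 0..n).
\<close>

record gperm =
  len  :: nat
  perm :: "nat \<Rightarrow> nat"
  vl   :: "nat \<Rightarrow> nat"
  hl   :: "nat \<Rightarrow> nat"

definition pts :: "gperm \<Rightarrow> nat set" where
  "pts G = {1..len G}"

definition in_col :: "gperm \<Rightarrow> nat \<Rightarrow> nat \<Rightarrow> bool" where
  "in_col G i x \<longleftrightarrow> vl G (i - 1) < x \<and> x \<le> vl G i"

definition in_row :: "gperm \<Rightarrow> nat \<Rightarrow> nat \<Rightarrow> bool" where
  "in_row G j x \<longleftrightarrow> hl G (j - 1) < perm G x \<and> perm G x \<le> hl G j"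

definition gridding_matrix :: "(nat \<Rightarrow> nat \<Rightarrow> int) \<Rightarrow> nat \<Rightarrow> nat \<Rightarrow> bool" where
  "gridding_matrix M m n \<longleftrightarrow> (\<forall>i\<in>{1..m}. \<forall>j\<in>{1..n}. M i j \<in> {0, 1, -1})"

definition partial_mult_matrix ::
  "(nat \<Rightarrow> nat \<Rightarrow> int) \<Rightarrow> nat \<Rightarrow> nat \<Rightarrow> (nat \<Rightarrow> int) \<Rightarrow> (nat \<Rightarrow> int) \<Rightarrow> bool" where
  "partial_mult_matrix M m n c r \<longleftrightarrow>
     gridding_matrix M m n \<and>
     (\<forall>i\<in>{1..m}. c i \<in> {1, -1}) \<and> (\<forall>j\<in>{1..n}. r j \<in> {1, -1}) \<and>
     (\<forall>i\<in>{1..m}. \<forall>j\<in>{1..n}. M i j \<noteq> 0 \<longrightarrow> M i j = c i * r j)"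

definition gridded :: "(nat \<Rightarrow> nat \<Rightarrow> int) \<Rightarrow> nat \<Rightarrow> nat \<Rightarrow> gperm \<Rightarrow> bool" where
  "gridded M m n G \<longleftrightarrow>
     bij_betw (perm G) {1..len G} {1..len G} \<and>
     vl G 0 = 0 \<and> vl G m = len G \<and> (\<forall>i\<in>{1..m}. vl G (i - 1) \<le> vl G i) \<and>
     hl G 0 = 0 \<and> hl G n = len G \<and> (\<forall>j\<in>{1..n}. hl G (j - 1) \<le> hl G j) \<and>
     (\<forall>i\<in>{1..m}. \<forall>j\<in>{1..n}. \<forall>x\<in>pts G. \<forall>y\<in>pts G.
        in_col G i x \<and> in_row G j x \<and> in_col G i y \<and> in_row G j y \<longrightarrow>
          M i j \<noteq> 0 \<and>
          (M i j = 1 \<longrightarrow> x < y \<longrightarrow> perm G x < perm G y) \<and>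
          (M i j = -1 \<longrightarrow> x < y \<longrightarrow> perm G y < perm G x))"

definition col_prec :: "(nat \<Rightarrow> int) \<Rightarrow> nat \<Rightarrow> nat \<Rightarrow> nat \<Rightarrow> bool" where
  "col_prec c i x y \<longleftrightarrow> (if c i = 1 then x < y else y < x)"

definition row_prec :: "(nat \<Rightarrow> int) \<Rightarrow> nat \<Rightarrow> nat \<Rightarrow> nat \<Rightarrow> bool" where
  "row_prec r j a b \<longleftrightarrow> (if r j = 1 then a < b else b < a)"

definition orient_edges ::
  "nat \<Rightarrow> nat \<Rightarrow> (nat \<Rightarrow> int) \<Rightarrow> (nat \<Rightarrow> int) \<Rightarrow> gperm \<Rightarrow> (nat \<times> nat) set" where
  "orient_edges m n c r G = {(x, y). x \<in> pts G \<and> y \<in> pts G \<and>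
     ((\<exists>i\<in>{1..m}. in_col G i x \<and> in_col G i y \<and> col_prec c i x y) \<or>
      (\<exists>j\<in>{1..n}. in_row G j x \<and> in_row G j y \<and> row_prec r j (perm G x) (perm G y)))}"

definition strongly_connected :: "nat set \<Rightarrow> (nat \<times> nat) set \<Rightarrow> bool" where
  "strongly_connected V E \<longleftrightarrow> (\<forall>x\<in>V. \<forall>y\<in>V. (x, y) \<in> E\<^sup>*)"

definition is_msum ::
  "nat \<Rightarrow> nat \<Rightarrow> (nat \<Rightarrow> int) \<Rightarrow> (nat \<Rightarrow> int) \<Rightarrow> gperm \<Rightarrow> gperm \<Rightarrow> gperm \<Rightarrow> bool" where
  "is_msum m n c r S T P \<longleftrightarrow>
    (\<exists>f g.
       f ` pts S \<subseteq> pts P \<and> g ` pts T \<subseteq> pts P \<and>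
       inj_on f (pts S) \<and> inj_on g (pts T) \<and>
       f ` pts S \<inter> g ` pts T = {} \<and> f ` pts S \<union> g ` pts T = pts P \<and>
       (\<forall>x\<in>pts S. (\<forall>i\<in>{1..m}. in_col P i (f x) \<longleftrightarrow> in_col S i x) \<and>
                  (\<forall>j\<in>{1..n}. in_row P j (f x) \<longleftrightarrow> in_row S j x)) \<and>
       (\<forall>y\<in>pts T. (\<forall>i\<in>{1..m}. in_col P i (g y) \<longleftrightarrow> in_col T i y) \<and>
                  (\<forall>j\<in>{1..n}. in_row P j (g y) \<longleftrightarrow> in_row T j y)) \<and>
       (\<forall>x\<in>pts S. \<forall>x'\<in>pts S. (x < x' \<longleftrightarrow> f x < f x') \<and>
                   (perm S x < perm S x' \<longleftrightarrow> perm P (f x) < perm P (f x'))) \<and>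
       (\<forall>y\<in>pts T. \<forall>y'\<in>pts T. (y < y' \<longleftrightarrow> g y < g y') \<and>
                   (perm T y < perm T y' \<longleftrightarrow> perm P (g y) < perm P (g y'))) \<and>
       (\<forall>x\<in>pts S. \<forall>y\<in>pts T.
          (\<forall>i\<in>{1..m}. in_col P i (f x) \<and> in_col P i (g y) \<longrightarrow> col_prec c i (f x) (g y)) \<and>
          (\<forall>j\<in>{1..n}. in_row P j (f x) \<and> in_row P j (g y) \<longrightarrow>
               row_prec r j (perm P (f x)) (perm P (g y)))))"

definition M_divisible ::
  "(nat \<Rightarrow> nat \<Rightarrow> int) \<Rightarrow> nat \<Rightarrow> nat \<Rightarrow> (nat \<Rightarrow> int) \<Rightarrow> (nat \<Rightarrow> int) \<Rightarrow> gperm \<Rightarrow> bool" where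
  "M_divisible M m n c r P \<longleftrightarrow>
     (\<exists>S T. gridded M m n S \<and> gridded M m n T \<and> len S > 0 \<and> len T > 0 \<and>
            is_msum m n c r S T P)"

definition M_indivisible ::
  "(nat \<Rightarrow> nat \<Rightarrow> int) \<Rightarrow> nat \<Rightarrow> nat \<Rightarrow> (nat \<Rightarrow> int) \<Rightarrow> (nat \<Rightarrow> int) \<Rightarrow> gperm \<Rightarrow> bool" where
  "M_indivisible M m n c r P \<longleftrightarrow> \<not> M_divisible M m n c r P"

end

theory Submission
  imports Defs
begin

(* An M-sum decomposition of P amounts to a split of its points into nonempty sets A and B
   such that A precedes B in every column and row of cells: the summands are recovered by
   standardising A and B, i.e. replacing positions, values and grid lines by their ranks.
   Since every column and row orientation is a strict total order, A precedes B exactly when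
   no edge of the orientation digraph leads from B back to A. Finally, a digraph fails to be
   strongly connected exactly when its vertices split in this way: if x cannot reach y, take
   for A the vertices that reach y. *)

lemma finite_pts [simp]: "finite (pts P)"
  unfolding pts_def by simp

lemma bij_betw_perm_pts: "gridded M m n P \<Longrightarrow> bij_betw (perm P) (pts P) (pts P)"
  unfolding gridded_def pts_def by (elim conjE)

definition rank :: "nat set \<Rightarrow> nat \<Rightarrow> nat" where
  "rank A x = card {a\<in>A. a \<le> x}"

lemma rank_mono: "finite A \<Longrightarrow> v \<le> w \<Longrightarrow> rank A v \<le> rank A w"
  unfolding rank_def by (intro card_mono) auto

lemma rank_le_rank_iff:
  assumes "finite A" "x \<in> A"
  shows "rank A x \<le> rank A v \<longleftrightarrow> x \<le> v"
proof
  assume "rank A x \<le> rank A v"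
  show "x \<le> v"
  proof (rule ccontr)
    assume "\<not> x \<le> v"
    then have "{a\<in>A. a \<le> v} \<subset> {a\<in>A. a \<le> x}" using assms(2) by auto
    then have "rank A v < rank A x" unfolding rank_def using assms(1) by (simp add: psubset_card_mono)
    with \<open>rank A x \<le> rank A v\<close> show False by simp
  qed
qed (simp add: rank_mono assms)

lemma rank_less_rank_iff: "finite A \<Longrightarrow> y \<in> A \<Longrightarrow> rank A v < rank A y \<longleftrightarrow> v < y"
  using rank_le_rank_iff[of A y v] by auto

lemma bij_betw_rank:
  assumes "finite A"
  shows "bij_betw (rank A) A {1..card A}"
proof -
  have "strict_mono_on A (rank A)"
    by (rule strict_mono_onI) (simp add: rank_less_rank_iff assms)
  then have inj: "inj_on (rank A) A" by (rule strict_mono_on_imp_inj_on)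
  have "rank A x \<in> {1..card A}" if "x \<in> A" for x
  proof -
    have "0 < rank A x" unfolding rank_def using that assms by (subst card_gt_0_iff) auto
    moreover have "rank A x \<le> card A" unfolding rank_def using assms by (intro card_mono) auto
    ultimately show ?thesis by simp
  qed
  then have "rank A ` A \<subseteq> {1..card A}" by blast
  moreover have "card (rank A ` A) = card {1..card A}" using card_image[OF inj] by simp
  ultimately have "rank A ` A = {1..card A}" by (intro card_subset_eq) auto
  with inj show ?thesis unfolding bij_betw_def by simp
qed

lemma rank_eq_0: "\<forall>a\<in>A. v < a \<Longrightarrow> rank A v = 0"
  unfolding rank_def by (simp add: not_le[symmetric])

lemma rank_eq_card: "\<forall>a\<in>A. a \<le> v \<Longrightarrow> rank A v = card A"
  unfolding rank_def by (rule arg_cong[of _ _ card]) blast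

text \<open>Grid lines are carried along by rank, so every point of A keeps its cell.\<close>
definition sub_gperm :: "gperm \<Rightarrow> nat set \<Rightarrow> gperm" where
  "sub_gperm P A = \<lparr>len = card A,
     perm = (\<lambda>k. rank (perm P ` A) (perm P (inv_into A (rank A) k))),
     vl = (\<lambda>i. rank A (vl P i)),
     hl = (\<lambda>j. rank (perm P ` A) (hl P j))\<rparr>"

definition cell_embedding :: "nat \<Rightarrow> nat \<Rightarrow> gperm \<Rightarrow> gperm \<Rightarrow> (nat \<Rightarrow> nat) \<Rightarrow> bool" where
  "cell_embedding m n S P f \<longleftrightarrow>
     inj_on f (pts S) \<and> f ` pts S \<subseteq> pts P \<and>
     (\<forall>x\<in>pts S. (\<forall>i\<in>{1..m}. in_col P i (f x) \<longleftrightarrow> in_col S i x) \<and>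
                (\<forall>j\<in>{1..n}. in_row P j (f x) \<longleftrightarrow> in_row S j x)) \<and>
     (\<forall>x\<in>pts S. \<forall>x'\<in>pts S. (x < x' \<longleftrightarrow> f x < f x') \<and>
                (perm S x < perm S x' \<longleftrightarrow> perm P (f x) < perm P (f x')))"

lemma gridded_cell_embedding:
  assumes gr: "gridded M m n P" and emb: "cell_embedding m n S P f"
    and "i \<in> {1..m}" "j \<in> {1..n}" "x \<in> pts S" "y \<in> pts S"
    and "in_col S i x" "in_row S j x" "in_col S i y" "in_row S j y"
  shows "M i j \<noteq> 0 \<and>
    (M i j = 1 \<longrightarrow> x < y \<longrightarrow> perm S x < perm S y) \<and>
    (M i j = -1 \<longrightarrow> x < y \<longrightarrow> perm S y < perm S x)"
proof -
  have "f x \<in> pts P" "f y \<in> pts P"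
    "in_col P i (f x)" "in_row P j (f x)" "in_col P i (f y)" "in_row P j (f y)"
    using emb assms(3-) unfolding cell_embedding_def by auto
  then have "M i j \<noteq> 0 \<and>
      (M i j = 1 \<longrightarrow> f x < f y \<longrightarrow> perm P (f x) < perm P (f y)) \<and>
      (M i j = -1 \<longrightarrow> f x < f y \<longrightarrow> perm P (f y) < perm P (f x))"
    using gr assms(3,4) unfolding gridded_def by (elim conjE) blast
  then show ?thesis using emb assms(5,6) unfolding cell_embedding_def by auto
qed

lemma pts_sub_gperm:
  assumes "A \<subseteq> pts P"
  shows "pts (sub_gperm P A) = rank A ` A"
  using bij_betw_rank[OF finite_subset[OF assms finite_pts]]
  unfolding pts_def sub_gperm_def bij_betw_def by simp

lemma perm_sub_gperm_rank:
  assumes "A \<subseteq> pts P" "a \<in> A"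
  shows "perm (sub_gperm P A) (rank A a) = rank (perm P ` A) (perm P a)"
proof -
  have "inj_on (rank A) A"
    using bij_betw_rank[OF finite_subset[OF assms(1) finite_pts]] by (rule bij_betw_imp_inj_on)
  then show ?thesis unfolding sub_gperm_def using assms(2) by simp
qed

lemma
  assumes "A \<subseteq> pts P"
  shows cell_embedding_sub_gperm: "cell_embedding m n (sub_gperm P A) P (inv_into A (rank A))"
    and image_sub_gperm: "inv_into A (rank A) ` pts (sub_gperm P A) = A"
proof -
  let ?S = "sub_gperm P A" and ?f = "inv_into A (rank A)" and ?B = "perm P ` A"
  have finA: "finite A" and finB: "finite ?B" using finite_subset[OF assms finite_pts] by auto
  have inj: "inj_on (rank A) A" using bij_betw_rank[OF finA] by (rule bij_betw_imp_inj_on)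
  have ptsS: "pts ?S = rank A ` A" using assms by (rule pts_sub_gperm)
  have f_rank: "?f (rank A a) = a" if "a \<in> A" for a using inj that by simp
  show "?f ` pts ?S = A" unfolding ptsS using f_rank by (simp add: image_image)
  have "inj_on ?f (pts ?S)" unfolding ptsS using inj by (simp add: inj_on_inv_into)
  moreover have "?f ` pts ?S \<subseteq> pts P" using \<open>?f ` pts ?S = A\<close> assms by simp
  moreover have "in_col P i a \<longleftrightarrow> in_col ?S i (rank A a)" if "a \<in> A" for a i
    unfolding in_col_def using that finA by (simp add: sub_gperm_def rank_le_rank_iff rank_less_rank_iff)
  moreover have "in_row P j a \<longleftrightarrow> in_row ?S j (rank A a)" if "a \<in> A" for a j
    unfolding in_row_def using that finB perm_sub_gperm_rank[OF assms that]
    by (simp add: sub_gperm_def rank_le_rank_iff rank_less_rank_iff)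
  moreover have "perm ?S (rank A a) < perm ?S (rank A a') \<longleftrightarrow> perm P a < perm P a'"
    if "a \<in> A" "a' \<in> A" for a a'
    using that finB by (simp add: perm_sub_gperm_rank[OF assms] rank_less_rank_iff)
  ultimately show "cell_embedding m n ?S P ?f"
    unfolding cell_embedding_def ptsS using finA f_rank by (simp add: rank_less_rank_iff)
qed

lemma bij_betw_perm_sub_gperm:
  assumes "A \<subseteq> pts P" "inj_on (perm P) A"
  shows "bij_betw (perm (sub_gperm P A)) (pts (sub_gperm P A)) (pts (sub_gperm P A))"
proof -
  let ?f = "inv_into A (rank A)" and ?B = "perm P ` A"
  have finA: "finite A" using finite_subset[OF assms(1) finite_pts] .
  have f: "bij_betw ?f {1..card A} A" using bij_betw_rank[OF finA] by (rule bij_betw_inv_into)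
  have p: "bij_betw (perm P) A ?B" using assms(2) by (simp add: bij_betw_def)
  have r: "bij_betw (rank ?B) ?B {1..card A}"
    using bij_betw_rank[of ?B] finA card_image[OF assms(2)] by simp
  have "bij_betw (rank ?B \<circ> perm P \<circ> ?f) {1..card A} {1..card A}"
    using bij_betw_trans[OF bij_betw_trans[OF f p] r] by (simp add: comp_assoc)
  moreover have "perm (sub_gperm P A) = rank ?B \<circ> perm P \<circ> ?f"
    by (simp add: sub_gperm_def comp_def)
  ultimately show ?thesis by (simp add: pts_def sub_gperm_def)
qed

lemma gridded_sub_gperm:
  assumes gr: "gridded M m n P" and A: "A \<subseteq> pts P"
  shows "gridded M m n (sub_gperm P A)"
proof -
  let ?S = "sub_gperm P A" and ?f = "inv_into A (rank A)" and ?B = "perm P ` A"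
  have bijP: "bij_betw (perm P) (pts P) (pts P)" using gr by (rule bij_betw_perm_pts)
  then have inj: "inj_on (perm P) A" using A by (meson bij_betw_imp_inj_on inj_on_subset)
  have B: "?B \<subseteq> pts P" using bijP A by (auto dest: bij_betwE)
  have finA: "finite A" and finB: "finite ?B" using finite_subset[OF A finite_pts] by auto
  have pos: "\<forall>a\<in>X. 0 < a" and le_len: "\<forall>a\<in>X. a \<le> len P" if "X \<subseteq> pts P" for X
    using that by (auto simp: pts_def)
  have emb: "cell_embedding m n ?S P ?f" using A by (rule cell_embedding_sub_gperm)
  have lines: "vl P 0 = 0" "vl P m = len P" "\<forall>i\<in>{1..m}. vl P (i - 1) \<le> vl P i"
    "hl P 0 = 0" "hl P n = len P" "\<forall>j\<in>{1..n}. hl P (j - 1) \<le> hl P j"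
    using gr unfolding gridded_def by auto
  have "card ?B = card A" using inj by (rule card_image)
  show ?thesis
    unfolding gridded_def
  proof (intro conjI)
    show "bij_betw (perm ?S) {1..len ?S} {1..len ?S}"
      using bij_betw_perm_sub_gperm[OF A inj] unfolding pts_def .
    show "vl ?S 0 = 0" "hl ?S 0 = 0"
      using lines pos[OF A] pos[OF B] by (simp_all add: sub_gperm_def rank_eq_0)
    show "vl ?S m = len ?S" "hl ?S n = len ?S"
      using lines le_len[OF A] le_len[OF B] \<open>card ?B = card A\<close>
      by (simp_all add: sub_gperm_def rank_eq_card)
    show "\<forall>i\<in>{1..m}. vl ?S (i - 1) \<le> vl ?S i"
      using lines(3) finA by (simp add: sub_gperm_def rank_mono)
    show "\<forall>j\<in>{1..n}. hl ?S (j - 1) \<le> hl ?S j"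
      using lines(6) finB by (simp add: sub_gperm_def rank_mono)
  qed (use gridded_cell_embedding[OF gr emb] in blast)
qed

definition precedes_all ::
  "nat \<Rightarrow> nat \<Rightarrow> (nat \<Rightarrow> int) \<Rightarrow> (nat \<Rightarrow> int) \<Rightarrow> gperm \<Rightarrow> nat set \<Rightarrow> nat set \<Rightarrow> bool" where
  "precedes_all m n c r P A B \<longleftrightarrow> (\<forall>a\<in>A. \<forall>b\<in>B.
     (\<forall>i\<in>{1..m}. in_col P i a \<and> in_col P i b \<longrightarrow> col_prec c i a b) \<and>
     (\<forall>j\<in>{1..n}. in_row P j a \<and> in_row P j b \<longrightarrow> row_prec r j (perm P a) (perm P b)))"

lemma is_msum_iff:
  "is_msum m n c r S T P \<longleftrightarrow>
     (\<exists>f g. cell_embedding m n S P f \<and> cell_embedding m n T P g \<and>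
        f ` pts S \<inter> g ` pts T = {} \<and> f ` pts S \<union> g ` pts T = pts P \<and>
        precedes_all m n c r P (f ` pts S) (g ` pts T))"
  unfolding is_msum_def cell_embedding_def precedes_all_def
  by (intro ex_cong1) (simp add: conj_ac)

lemma M_divisible_iff_ordered_split:
  assumes "gridded M m n P"
  shows "M_divisible M m n c r P \<longleftrightarrow>
    (\<exists>A B. A \<noteq> {} \<and> B \<noteq> {} \<and> A \<inter> B = {} \<and> A \<union> B = pts P \<and> precedes_all m n c r P A B)"
proof
  assume "M_divisible M m n c r P"
  then obtain S T where "len S > 0" "len T > 0" and msum: "is_msum m n c r S T P"
    unfolding M_divisible_def by auto
  then have "pts S \<noteq> {}" "pts T \<noteq> {}" by (auto simp: pts_def)
  moreover obtain f g where
    "f ` pts S \<inter> g ` pts T = {}" "f ` pts S \<union> g ` pts T = pts P"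
    "precedes_all m n c r P (f ` pts S) (g ` pts T)"
    using msum unfolding is_msum_iff by blast
  ultimately show "\<exists>A B. A \<noteq> {} \<and> B \<noteq> {} \<and> A \<inter> B = {} \<and> A \<union> B = pts P \<and>
    precedes_all m n c r P A B" by (intro exI[of _ "f ` pts S"] exI[of _ "g ` pts T"]) simp
next
  assume "\<exists>A B. A \<noteq> {} \<and> B \<noteq> {} \<and> A \<inter> B = {} \<and> A \<union> B = pts P \<and>
    precedes_all m n c r P A B"
  then obtain A B where split: "A \<noteq> {}" "B \<noteq> {}" "A \<inter> B = {}" "A \<union> B = pts P"
    and prec: "precedes_all m n c r P A B" by blast
  then have "A \<subseteq> pts P" "B \<subseteq> pts P" by auto
  then have "finite A" "finite B" by (simp_all add: finite_subset)
  then have "len (sub_gperm P A) > 0" "len (sub_gperm P B) > 0"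
    using split by (simp_all add: sub_gperm_def card_gt_0_iff)
  moreover have "is_msum m n c r (sub_gperm P A) (sub_gperm P B) P"
  proof -
    let ?f = "inv_into A (rank A)" and ?g = "inv_into B (rank B)"
    have "cell_embedding m n (sub_gperm P A) P ?f" "cell_embedding m n (sub_gperm P B) P ?g"
      "?f ` pts (sub_gperm P A) = A" "?g ` pts (sub_gperm P B) = B"
      using \<open>A \<subseteq> pts P\<close> \<open>B \<subseteq> pts P\<close>
      by (simp_all add: cell_embedding_sub_gperm image_sub_gperm)
    then show ?thesis unfolding is_msum_iff using split prec by (intro exI[of _ ?f] exI[of _ ?g]) simp
  qed
  ultimately show "M_divisible M m n c r P"
    unfolding M_divisible_def
    using gridded_sub_gperm[OF assms] \<open>A \<subseteq> pts P\<close> \<open>B \<subseteq> pts P\<close> by blast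
qed

lemma col_prec_iff_not_swap: "x \<noteq> y \<Longrightarrow> col_prec c i x y \<longleftrightarrow> \<not> col_prec c i y x"
  unfolding col_prec_def by auto

lemma row_prec_iff_not_swap: "a \<noteq> b \<Longrightarrow> row_prec r j a b \<longleftrightarrow> \<not> row_prec r j b a"
  unfolding row_prec_def by auto

lemma orient_edges_subset: "orient_edges m n c r P \<subseteq> pts P \<times> pts P"
  unfolding orient_edges_def by auto

lemma precedes_all_iff_no_back_edge:
  assumes inj: "inj_on (perm P) (pts P)" and "A \<subseteq> pts P" "B \<subseteq> pts P" "A \<inter> B = {}"
  shows "precedes_all m n c r P A B \<longleftrightarrow> (\<forall>b\<in>B. \<forall>a\<in>A. (b, a) \<notin> orient_edges m n c r P)"
proof -
  have "(b, a) \<notin> orient_edges m n c r P \<longleftrightarrow>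
      (\<forall>i\<in>{1..m}. in_col P i a \<and> in_col P i b \<longrightarrow> col_prec c i a b) \<and>
      (\<forall>j\<in>{1..n}. in_row P j a \<and> in_row P j b \<longrightarrow> row_prec r j (perm P a) (perm P b))"
    if "a \<in> A" "b \<in> B" for a b
  proof -
    have "a \<noteq> b" "perm P a \<noteq> perm P b"
      using that assms by (auto dest: inj_onD)
    then show ?thesis
      using that assms(2,3) col_prec_iff_not_swap[of a b c] row_prec_iff_not_swap[of "perm P a" "perm P b" r]
      unfolding orient_edges_def by auto
  qed
  then show ?thesis unfolding precedes_all_def by auto
qed

lemma strongly_connected_iff_no_back_edge_split:
  assumes "E \<subseteq> V \<times> V"
  shows "strongly_connected V E \<longleftrightarrow>
    \<not> (\<exists>A B. A \<noteq> {} \<and> B \<noteq> {} \<and> A \<inter> B = {} \<and> A \<union> B = V \<and> (\<forall>b\<in>B. \<forall>a\<in>A. (b, a) \<notin> E))"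
proof
  assume sc: "strongly_connected V E"
  show "\<not> (\<exists>A B. A \<noteq> {} \<and> B \<noteq> {} \<and> A \<inter> B = {} \<and> A \<union> B = V \<and> (\<forall>b\<in>B. \<forall>a\<in>A. (b, a) \<notin> E))"
  proof (intro notI, elim exE conjE)
    fix A B assume "A \<noteq> {}" "B \<noteq> {}" "A \<inter> B = {}" "A \<union> B = V"
      and no_back: "\<forall>b\<in>B. \<forall>a\<in>A. (b, a) \<notin> E"
    then obtain a b where "a \<in> A" "b \<in> B" by blast
    have "v \<in> B" if "(b, v) \<in> E\<^sup>*" for v
      using that
    proof (induction rule: rtrancl_induct)
      case (step u v)
      then show ?case using assms no_back \<open>A \<union> B = V\<close> by blast
    qed (fact \<open>b \<in> B\<close>)
    moreover have "(b, a) \<in> E\<^sup>*" using sc \<open>a \<in> A\<close> \<open>b \<in> B\<close> \<open>A \<union> B = V\<close>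
      unfolding strongly_connected_def by blast
    ultimately show False using \<open>a \<in> A\<close> \<open>A \<inter> B = {}\<close> by blast
  qed
next
  assume no_split: "\<not> (\<exists>A B. A \<noteq> {} \<and> B \<noteq> {} \<and> A \<inter> B = {} \<and> A \<union> B = V \<and>
    (\<forall>b\<in>B. \<forall>a\<in>A. (b, a) \<notin> E))"
  show "strongly_connected V E"
    unfolding strongly_connected_def
  proof (intro ballI, rule ccontr)
    fix x y assume "x \<in> V" "y \<in> V" "(x, y) \<notin> E\<^sup>*"
    define A where "A = {z\<in>V. (z, y) \<in> E\<^sup>*}"
    have "y \<in> A" "x \<in> V - A" using \<open>x \<in> V\<close> \<open>y \<in> V\<close> \<open>(x, y) \<notin> E\<^sup>*\<close> by (auto simp: A_def)
    moreover have "\<forall>b\<in>V - A. \<forall>a\<in>A. (b, a) \<notin> E"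
      unfolding A_def by (auto intro: converse_rtrancl_into_rtrancl)
    moreover have "A \<subseteq> V" by (auto simp: A_def)
    ultimately have "\<exists>A B. A \<noteq> {} \<and> B \<noteq> {} \<and> A \<inter> B = {} \<and> A \<union> B = V \<and>
        (\<forall>b\<in>B. \<forall>a\<in>A. (b, a) \<notin> E)"
      by (intro exI[of _ A] exI[of _ "V - A"]) auto
    with no_split show False by contradiction
  qed
qed

theorem lemma3p2:
  fixes M :: "nat \<Rightarrow> nat \<Rightarrow> int" and m n :: nat and c r :: "nat \<Rightarrow> int" and P :: gperm
  assumes "partial_mult_matrix M m n c r"
    and "gridded M m n P"
  shows "M_indivisible M m n c r P \<longleftrightarrow> strongly_connected (pts P) (orient_edges m n c r P)"
proof -
  let ?E = "orient_edges m n c r P"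
  have inj: "inj_on (perm P) (pts P)"
    using bij_betw_perm_pts[OF assms(2)] by (rule bij_betw_imp_inj_on)
  have no_back_edge_iff: "precedes_all m n c r P A B \<longleftrightarrow> (\<forall>b\<in>B. \<forall>a\<in>A. (b, a) \<notin> ?E)"
    if "A \<inter> B = {}" "A \<union> B = pts P" for A B
    using that by (intro precedes_all_iff_no_back_edge[OF inj]) auto
  have "M_divisible M m n c r P \<longleftrightarrow>
      (\<exists>A B. A \<noteq> {} \<and> B \<noteq> {} \<and> A \<inter> B = {} \<and> A \<union> B = pts P \<and> precedes_all m n c r P A B)"
    using assms(2) by (rule M_divisible_iff_ordered_split)
  also have "\<dots> \<longleftrightarrow>
      (\<exists>A B. A \<noteq> {} \<and> B \<noteq> {} \<and> A \<inter> B = {} \<and> A \<union> B = pts P \<and> (\<forall>b\<in>B. \<forall>a\<in>A. (b, a) \<notin> ?E))"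
    by (intro ex_cong1 conj_cong refl no_back_edge_iff)
  also have "\<dots> \<longleftrightarrow> \<not> strongly_connected (pts P) ?E"
    unfolding strongly_connected_iff_no_back_edge_split[OF orient_edges_subset] not_not ..
  finally show ?thesis unfolding M_indivisible_def by simp
qed

end
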